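(* Let $n>1$ be an integer and let $p>q$ be primes neither of which divides $n$. Then $G(pn)<G(qn)$.
   Context: For a positive integer $n$, $\sigma(n)=\sum_{d\mid n} d$. For integers $n>1$ define $G(n)=\dfrac{\sigma(n)}{n\log\log n}$ (natural logarithms). *)

theory Defs
  imports Complex_Main "HOL-Computational_Algebra.Primes"
begin

definition divisor_sigma :: "nat \<Rightarrow> nat" where
  "divisor_sigma n = (\<Sum>d\<in>{d. d dvd n}. d)"

definition G :: "nat \<Rightarrow> real" where
  "G n = real (divisor_sigma n) / (real n * ln (ln (real n)))"

end

theory Submission
  imports Defs
begin

(* For n > 1 and a prime p not dividing n, the divisors of pn are the divisors d of n
   together with the disjoint copies pd, so sigma is multiplicative here:
   sigma(pn) = (p + 1) sigma(n).  Hence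
       G(pn) = (1 + 1/p) * (sigma(n)/n) / ln ln (pn).
   For primes p > q not dividing n the factor 1 + 1/p is strictly smaller than 1 + 1/q,
   while ln ln (pn) > ln ln (qn) > 0 because qn >= 4 > e.  A positive quotient with a
   smaller numerator and a larger denominator is smaller, which gives G(pn) < G(qn). *)

lemma divisors_mult_prime:
  fixes p n :: nat
  assumes "prime p" and "\<not> p dvd n"
  shows "{d. d dvd p * n} = {d. d dvd n} \<union> (\<lambda>e. p * e) ` {d. d dvd n}"
proof (intro set_eqI iffI)
  fix d assume "d \<in> {d. d dvd p * n}"
  hence d: "d dvd p * n" by simp
  show "d \<in> {d. d dvd n} \<union> (\<lambda>e. p * e) ` {d. d dvd n}"
  proof (cases "p dvd d")
    case True
    then obtain e where e: "d = p * e" by blast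
    with d assms(1) have "e dvd n" by (simp add: prime_gt_0_nat)
    with e show ?thesis by blast
  next
    case False
    hence "coprime d p"
      using assms(1) by (metis coprime_commute prime_imp_coprime)
    with d have "d dvd n" using coprime_dvd_mult_right_iff by blast
    thus ?thesis by simp
  qed
qed auto

text \<open>Consequently \<open>\<sigma>(p n) = (p + 1) \<sigma>(n)\<close>; the two parts of the divisor set are disjoint
  because no divisor of \<open>n\<close> is a multiple of \<open>p\<close>.\<close>

lemma divisor_sigma_mult_prime:
  fixes p n :: nat
  assumes "prime p" and "\<not> p dvd n" and "n > 0"
  shows "divisor_sigma (p * n) = (p + 1) * divisor_sigma n"
proof -
  let ?D = "{d. d dvd n}"
  have fin: "finite ?D" using assms(3) by simp
  have disj: "?D \<inter> (\<lambda>e. p * e) ` ?D = {}"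
    using assms(2) by (auto intro: dvd_mult_left)
  have inj: "inj_on (\<lambda>e. p * e) ?D"
    using assms(1) by (auto simp: inj_on_def prime_gt_0_nat)
  have "divisor_sigma (p * n) = (\<Sum>d\<in>?D. d) + (\<Sum>d\<in>(\<lambda>e. p * e) ` ?D. d)"
    unfolding divisor_sigma_def divisors_mult_prime[OF assms(1,2)]
    using fin disj by (intro sum.union_disjoint) auto
  also have "(\<Sum>d\<in>(\<lambda>e. p * e) ` ?D. d) = p * (\<Sum>d\<in>?D. d)"
    by (simp add: sum.reindex[OF inj] sum_distrib_left)
  finally show ?thesis unfolding divisor_sigma_def by simp
qed

lemma divisor_sigma_pos:
  fixes n :: nat
  assumes "n > 0"
  shows "divisor_sigma n > 0"
proof -
  have "1 \<le> (\<Sum>d\<in>{d. d dvd n}. d)"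
    using assms by (intro member_le_sum) auto
  thus ?thesis unfolding divisor_sigma_def by simp
qed

lemma G_mult_prime:
  fixes p n :: nat
  assumes "prime p" and "\<not> p dvd n" and "n > 0"
  shows "G (p * n) = (1 + 1 / real p) * (real (divisor_sigma n) / real n)
                     / ln (ln (real p * real n))"
  unfolding G_def divisor_sigma_mult_prime[OF assms]
  using prime_gt_0_nat[OF assms(1)] assms(3) by (simp add: field_simps)

lemma ln_ln_pos_strict_mono:
  fixes x y :: real
  assumes "exp 1 < x" and "x < y"
  shows "0 < ln (ln x)" and "ln (ln x) < ln (ln y)"
proof -
  have x_pos: "0 < x" using assms(1) exp_gt_zero less_trans by blast
  have ln_x: "1 < ln x"
    using assms(1) x_pos by (metis ln_exp ln_less_cancel_iff exp_gt_zero)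
  show "0 < ln (ln x)" using ln_x by simp
  have "ln x < ln y" using assms(2) x_pos by simp
  thus "ln (ln x) < ln (ln y)" using ln_x by simp
qed

theorem mainTheorem10:
  fixes n p q :: nat
  assumes "n > 1" and "prime p" and "prime q" and "p > q"
    and "\<not> p dvd n" and "\<not> q dvd n"
  shows "G (p * n) < G (q * n)"
proof -
  define S where "S = real (divisor_sigma n) / real n"
  have S_pos: "0 < S"
    unfolding S_def using divisor_sigma_pos[of n] assms(1) by simp
  have q_ge_2: "real q \<ge> 2" using prime_ge_2_nat[OF assms(3)] by simp
  have "exp 1 < real q * real n"
    using exp_le mult_mono[OF q_ge_2, of 2 "real n"] assms(1) by simp
  moreover have "real q * real n < real p * real n"
    using assms(1,4) by simp
  ultimately have L_q: "0 < ln (ln (real q * real n))"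
    and L_qp: "ln (ln (real q * real n)) < ln (ln (real p * real n))"
    by (rule ln_ln_pos_strict_mono)+
  have factor: "1 + 1 / real p < 1 + 1 / real q"
    using assms(4) q_ge_2 by (simp add: frac_less2)
  have "(1 + 1 / real p) * S / ln (ln (real p * real n))
        < (1 + 1 / real q) * S / ln (ln (real q * real n))"
    using factor S_pos L_q L_qp
    by (intro frac_less2 mult_strict_right_mono) (auto simp: add_pos_nonneg)
  thus ?thesis
    using G_mult_prime[OF assms(2,5)] G_mult_prime[OF assms(3,6)] assms(1)
    unfolding S_def by simp
qed

end
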